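(* Let $n\ge1$ and $\rho\in S_{n+1}$. Then $\ell_L(\rho)=\ell_L(s_1\rho)$.
   Context: $B_m$ is the group of bijections $\sigma$ of $\{\pm1,\dots,\pm m\}$ with $\sigma(-i)=-\sigma(i)$, written in window notation $[\sigma(1),\dots,\sigma(m)]$, with product $(\sigma\tau)(i)=\sigma(\tau(i))$; $S_m\subseteq B_m$ consists of elements with all $\sigma(i)>0$. The Coxeter generators of $B_m$ are $s_0=[-1,2,\dots,m]$ and $s_i=$ the transposition of $i$ and $i+1$ ($1\le i\le m-1$); $\ell_B(\sigma)$ is the length with respect to $\{s_0,\dots,s_{m-1}\}$. $\mathrm{del}_B(\sigma)=\#\{2\le j\le m:\sigma(i)>\sigma(j)\text{ for all }1\le i<j\}$, and $\ell_L(\sigma)=\ell_B(\sigma)-\mathrm{del}_B(\sigma)$. *)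

theory Defs
  imports Main
begin

text \<open>The product is function composition: (sigma tau)(i) = sigma(tau(i)).\<close>

definition signed_perms :: "nat \<Rightarrow> (int \<Rightarrow> int) set" where
  "signed_perms m = {\<sigma>. bij_betw \<sigma> ({-int m..-1} \<union> {1..int m}) ({-int m..-1} \<union> {1..int m})
              \<and> (\<forall>i. \<sigma> (-i) = - \<sigma> i)
              \<and> (\<forall>i. i \<notin> {-int m..-1} \<union> {1..int m} \<longrightarrow> \<sigma> i = i)}"

definition unsigned_perms :: "nat \<Rightarrow> (int \<Rightarrow> int) set" where
  "unsigned_perms m = {\<sigma> \<in> signed_perms m. \<forall>i\<in>{1..int m}. \<sigma> i > 0}"

definition cox_gen :: "nat \<Rightarrow> int \<Rightarrow> int" where
  "cox_gen k = (if k = 0 then (\<lambda>x. if x = 1 then -1 else if x = -1 then 1 else x)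
                else (\<lambda>x. if x = int k then int k + 1 else if x = int k + 1 then int k
                          else if x = - int k then - int k - 1 else if x = - int k - 1 then - int k
                          else x))"

definition length_B :: "nat \<Rightarrow> (int \<Rightarrow> int) \<Rightarrow> nat" where
  "length_B m \<sigma> = (LEAST k. \<exists>ws. length ws = k \<and> set ws \<subseteq> {0..<m}
                        \<and> foldr (\<circ>) (map cox_gen ws) id = \<sigma>)"

definition del_B :: "nat \<Rightarrow> (int \<Rightarrow> int) \<Rightarrow> nat" where
  "del_B m \<sigma> = card {j \<in> {2..int m}. \<forall>i\<in>{1..<j}. \<sigma> i > \<sigma> j}"

definition length_L :: "nat \<Rightarrow> (int \<Rightarrow> int) \<Rightarrow> int" where
  "length_L m \<sigma> = int (length_B m \<sigma>) - int (del_B m \<sigma>)"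

end

theory Submission
  imports Defs
begin

(* For an unsigned permutation, the length in B_m is its number of inversions. A generator
   changes the number of inversions among positive positions of any odd injection by at most
   one; conversely, an unsigned permutation with an inversion has one between adjacent values,
   k + 1 before k, and s_k removes exactly that inversion.
   Left multiplication by s_1 swaps the values 1 and 2. If 2 precedes 1 in rho, this removes one
   inversion and one left-to-right minimum, namely the position of 1, so both length_B and del_B
   drop by one; the other case follows since s_1 is an involution. *)

lemma cox_gen_cox_gen [simp]: "cox_gen k (cox_gen k x) = x"
  unfolding cox_gen_def by auto

lemma cox_gen_comp_cox_gen_comp [simp]: "cox_gen k \<circ> (cox_gen k \<circ> f) = f"
  by (simp add: comp_def)

lemma cox_gen_minus: "cox_gen k (- x) = - cox_gen k x"
  unfolding cox_gen_def by auto

lemma inj_cox_gen: "inj (cox_gen k)"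
  by (metis cox_gen_cox_gen injI)

lemma cox_gen_less_iff:
  assumes "0 < x" "0 < y" "{x, y} \<noteq> {int k, int k + 1}"
  shows "cox_gen k x < cox_gen k y \<longleftrightarrow> x < y"
  using assms unfolding cox_gen_def by (auto simp: doubleton_eq_iff)

lemma cox_gen_inversion_abs:
  assumes "x < y" "cox_gen k y < cox_gen k x" "x \<noteq> 0" "y \<noteq> 0" "x \<noteq> - y"
  shows "{\<bar>x\<bar>, \<bar>y\<bar>} = {int k, int k + 1}"
  using assms unfolding cox_gen_def
  by (cases "k = 0") (simp_all add: insert_commute add.commute split: if_splits)

lemma inj_on_sorted_pair_eq:
  fixes f :: "'a::linorder \<Rightarrow> 'b"
  assumes inj: "inj_on f A" and A: "i \<in> A" "j \<in> A" "q \<in> A" "p \<in> A"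
    and eq: "{f i, f j} = {f q, f p}" and "i < j" "q < p"
  shows "(i, j) = (q, p)"
proof -
  from eq consider "f i = f q" "f j = f p" | "f i = f p" "f j = f q"
    by (auto simp: doubleton_eq_iff)
  then show ?thesis
  proof cases
    case 1
    then show ?thesis using inj_onD[OF inj] A by simp
  next
    case 2
    then have "i = p" "j = q" using inj_onD[OF inj] A by simp_all
    then show ?thesis using \<open>i < j\<close> \<open>q < p\<close> by simp
  qed
qed

lemma inj_on_abs_odd:
  fixes t :: "int \<Rightarrow> int"
  assumes "inj t" and odd: "\<And>i. t (- i) = - t i"
  shows "inj_on (\<lambda>i. \<bar>t i\<bar>) {0<..}"
proof (rule inj_onI)
  fix a b :: int assume ab: "a \<in> {0<..}" "b \<in> {0<..}" "\<bar>t a\<bar> = \<bar>t b\<bar>"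
  then have "t a = t b \<or> t a = t (- b)" by (auto simp: abs_eq_iff odd)
  then have "a = b \<or> a = - b" using \<open>inj t\<close> by (auto dest: injD)
  then show "a = b" using ab by auto
qed

lemma cox_gen_signed_perms:
  assumes "k < m"
  shows "cox_gen k \<in> signed_perms m"
proof -
  let ?S = "{-int m..-1} \<union> {1..int m}"
  have "cox_gen k i \<in> ?S" if "i \<in> ?S" for i
    using assms that unfolding cox_gen_def by (cases "k = 0") (simp_all split: if_splits)
  then have "cox_gen k ` ?S \<subseteq> ?S" by blast
  then have "bij_betw (cox_gen k) ?S ?S"
    using bij_betw_byWitness[of ?S "cox_gen k" "cox_gen k" ?S] by simp
  moreover have "cox_gen k i = i" if "i \<notin> ?S" for i
  proof -
    have "i = 0 \<or> int m < \<bar>i\<bar>" using that by auto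
    then show ?thesis using assms unfolding cox_gen_def by auto
  qed
  ultimately show ?thesis unfolding signed_perms_def using cox_gen_minus by blast
qed

lemma comp_signed_perms:
  assumes "\<sigma> \<in> signed_perms m" "\<tau> \<in> signed_perms m"
  shows "\<sigma> \<circ> \<tau> \<in> signed_perms m"
proof -
  let ?S = "{-int m..-1} \<union> {1..int m}"
  have "bij_betw \<tau> ?S ?S" "bij_betw \<sigma> ?S ?S"
    using assms unfolding signed_perms_def by blast+
  then have "bij_betw (\<sigma> \<circ> \<tau>) ?S ?S" by (rule bij_betw_trans)
  then show ?thesis using assms unfolding signed_perms_def by auto
qed

lemma cox_gen_comp_unsigned_perms:
  assumes "s \<in> unsigned_perms m" "1 \<le> k" "k < m"
  shows "cox_gen k \<circ> s \<in> unsigned_perms m"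
proof -
  have "cox_gen k \<circ> s \<in> signed_perms m"
    using assms cox_gen_signed_perms comp_signed_perms unfolding unsigned_perms_def by blast
  moreover have "cox_gen k x > 0" if "x > 0" for x
    using assms(2) that unfolding cox_gen_def by auto
  ultimately show ?thesis using assms(1) unfolding unsigned_perms_def by simp
qed

lemma unsigned_perms_bij_betw_pos:
  assumes "s \<in> unsigned_perms m"
  shows "bij_betw s {1..int m} {1..int m}"
proof -
  let ?P = "{1..int m}" and ?S = "{-int m..-1} \<union> {1..int m}"
  have bij: "bij_betw s ?S ?S" and pos: "\<forall>i\<in>?P. s i > 0"
    using assms by (auto simp: unsigned_perms_def signed_perms_def)
  have inj: "inj_on s ?P" using bij_betw_imp_inj_on[OF bij] by (rule inj_on_subset) auto
  moreover have "s ` ?P \<subseteq> ?P"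
  proof (rule image_subsetI)
    fix i assume "i \<in> ?P"
    then have "s i \<in> ?S" "s i > 0" using bij_betwE[OF bij] pos by auto
    then show "s i \<in> ?P" by auto
  qed
  ultimately show ?thesis by (simp add: bij_betw_def endo_inj_surj)
qed

lemma unsigned_perms_minus:
  "s \<in> unsigned_perms m \<Longrightarrow> s (- i) = - s i"
  by (simp add: unsigned_perms_def signed_perms_def)

definition inversions :: "nat \<Rightarrow> (int \<Rightarrow> int) \<Rightarrow> (int \<times> int) set" where
  "inversions m t = {(i, j). 1 \<le> i \<and> i < j \<and> j \<le> int m \<and> t j < t i}"

lemma finite_inversions [simp]: "finite (inversions m t)"
  by (rule finite_subset[of _ "{1..int m} \<times> {1..int m}"]) (auto simp: inversions_def)

lemma cox_gen_comp_new_inversion: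
  fixes t :: "int \<Rightarrow> int"
  assumes "inj t" and odd: "\<And>i. t (- i) = - t i"
    and "0 < i" "i < j" "cox_gen k (t j) < cox_gen k (t i)" "\<not> t j < t i"
  shows "{\<bar>t i\<bar>, \<bar>t j\<bar>} = {int k, int k + 1}"
proof -
  have t_eq: "a = b" if "t a = t b" for a b using \<open>inj t\<close> that by (rule injD)
  have "t l \<noteq> 0" if "l \<noteq> 0" for l using t_eq[of "- l" l] odd[of l] that by auto
  then have "t i \<noteq> 0" "t j \<noteq> 0" using assms(3,4) by auto
  moreover have "t i \<noteq> - t j" using t_eq[of i "- j"] odd[of j] assms(3,4) by auto
  moreover have "t i < t j" using t_eq[of i j] assms(4,6) by fastforce
  ultimately show ?thesis using cox_gen_inversion_abs assms(5) by blast
qed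

lemma card_inversions_cox_gen_comp_le:
  fixes t :: "int \<Rightarrow> int"
  assumes "inj t" and odd: "\<And>i. t (- i) = - t i"
  shows "card (inversions m (cox_gen k \<circ> t)) \<le> card (inversions m t) + 1"
proof -
  define E where
    "E = {(i, j). 1 \<le> i \<and> i < j \<and> j \<le> int m \<and> {\<bar>t i\<bar>, \<bar>t j\<bar>} = {int k, int k + 1}}"
  have "inversions m (cox_gen k \<circ> t) \<subseteq> inversions m t \<union> E"
  proof (rule subrelI)
    fix i j assume "(i, j) \<in> inversions m (cox_gen k \<circ> t)"
    then show "(i, j) \<in> inversions m t \<union> E"
      using cox_gen_comp_new_inversion[OF assms, of i j k]
      by (cases "t j < t i") (simp_all add: inversions_def E_def)
  qed
  moreover have "finite E"
    by (rule finite_subset[of _ "{1..int m} \<times> {1..int m}"]) (auto simp: E_def)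
  moreover have "card E \<le> 1"
  proof -
    have "x = y" if "x \<in> E" "y \<in> E" for x y
    proof -
      obtain i j where x: "x = (i, j)" "1 \<le> i" "i < j" "{\<bar>t i\<bar>, \<bar>t j\<bar>} = {int k, int k + 1}"
        using \<open>x \<in> E\<close> unfolding E_def by blast
      obtain i' j' where y: "y = (i', j')" "1 \<le> i'" "i' < j'"
          "{\<bar>t i'\<bar>, \<bar>t j'\<bar>} = {int k, int k + 1}"
        using \<open>y \<in> E\<close> unfolding E_def by blast
      show "x = y"
        using inj_on_sorted_pair_eq[OF inj_on_abs_odd[OF assms], of i j i' j'] x y by simp
    qed
    then show ?thesis using card_le_Suc0_iff_eq[OF \<open>finite E\<close>] by auto
  qed
  ultimately have "card (inversions m (cox_gen k \<circ> t)) \<le> card (inversions m t) + card E"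
    by (meson card_Un_le card_mono finite_UnI finite_inversions order_trans)
  then show ?thesis using \<open>card E \<le> 1\<close> by linarith
qed

lemma unsigned_perms_cox_gen_comp_less_iff:
  assumes "s \<in> unsigned_perms m" "q \<in> {1..int m}" "p \<in> {1..int m}" "q < p"
    and "s q = int k + 1" "s p = int k"
    and "i \<in> {1..int m}" "j \<in> {1..int m}" "i < j" "(i, j) \<noteq> (q, p)"
  shows "cox_gen k (s j) < cox_gen k (s i) \<longleftrightarrow> s j < s i"
proof -
  let ?P = "{1..int m}"
  have bij: "bij_betw s ?P ?P" using assms(1) by (rule unsigned_perms_bij_betw_pos)
  have "{s j, s i} \<noteq> {int k, int k + 1}"
  proof
    assume "{s j, s i} = {int k, int k + 1}"
    then have "{s i, s j} = {s q, s p}" using assms(5,6) by auto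
    then have "(i, j) = (q, p)"
      using inj_on_sorted_pair_eq[OF bij_betw_imp_inj_on[OF bij]] assms(2-4,7-9) by blast
    then show False using assms(10) by contradiction
  qed
  moreover have "0 < s i" "0 < s j" using bij_betwE[OF bij] assms(7,8) by fastforce+
  ultimately show ?thesis by (intro cox_gen_less_iff)
qed

lemma card_inversions_cox_gen_comp_swap:
  assumes "s \<in> unsigned_perms m" "1 \<le> q" "q < p" "p \<le> int m" "s q = int k + 1" "s p = int k"
  shows "card (inversions m s) = card (inversions m (cox_gen k \<circ> s)) + 1"
proof -
  let ?P = "{1..int m}"
  have qp: "q \<in> ?P" "p \<in> ?P" using assms(2-4) by auto
  have "s p \<in> ?P" using bij_betwE[OF unsigned_perms_bij_betw_pos[OF assms(1)]] qp(2) by blast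
  then have "1 \<le> k" using assms(6) by simp
  then have swap: "cox_gen k (s q) = int k" "cox_gen k (s p) = int k + 1"
    using assms(5,6) unfolding cox_gen_def by auto
  have same: "(i, j) \<in> inversions m s \<longleftrightarrow> (i, j) \<in> inversions m (cox_gen k \<circ> s)"
    if "(i, j) \<noteq> (q, p)" for i j
  proof (cases "1 \<le> i \<and> i < j \<and> j \<le> int m")
    case True
    then show ?thesis
      using unsigned_perms_cox_gen_comp_less_iff[OF assms(1) qp assms(3,5,6), of i j] that
      by (simp add: inversions_def)
  qed (auto simp: inversions_def)
  have "inversions m (cox_gen k \<circ> s) = inversions m s - {(q, p)}"
  proof (rule set_eqI)
    fix x :: "int \<times> int"
    obtain i j where "x = (i, j)" by force
    then show "x \<in> inversions m (cox_gen k \<circ> s) \<longleftrightarrow> x \<in> inversions m s - {(q, p)}"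
      using same[of i j] swap by (cases "x = (q, p)") (auto simp: inversions_def)
  qed
  moreover have "(q, p) \<in> inversions m s" using assms by (simp add: inversions_def)
  ultimately show ?thesis by (metis Suc_eq_plus1 card_Suc_Diff1 finite_inversions)
qed

lemma inversions_adjacent_values:
  assumes "s \<in> unsigned_perms m" "(i, j) \<in> inversions m s"
  shows "\<exists>q p. (q, p) \<in> inversions m s \<and> s q = s p + 1"
  using assms(2)
proof (induction "nat (s i - s j)" arbitrary: i j rule: less_induct)
  case less
  let ?P = "{1..int m}"
  have bij: "bij_betw s ?P ?P" using assms(1) by (rule unsigned_perms_bij_betw_pos)
  have ij: "1 \<le> i" "i < j" "j \<le> int m" "s j < s i" using less.prems by (auto simp: inversions_def)
  show ?case
  proof (cases "s i = s j + 1")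
    case False
    have "s i \<in> ?P" "s j \<in> ?P" using bij_betwE[OF bij] ij by auto
    then have "s j + 1 \<in> ?P" using ij(4) by auto
    then obtain l where l: "l \<in> ?P" "s l = s j + 1"
      using bij_betw_imp_surj_on[OF bij] by (metis imageE)
    have "s j + 1 < s i" using ij(4) False by linarith
    have "l \<noteq> j" using l by auto
    then consider "l < j" | "j < l" by linarith
    then show ?thesis
    proof cases
      case 1
      then have "(l, j) \<in> inversions m s" using l ij \<open>s j + 1 < s i\<close> by (auto simp: inversions_def)
      moreover have "nat (s l - s j) < nat (s i - s j)" using l \<open>s j + 1 < s i\<close> by simp
      ultimately show ?thesis using less.hyps by blast
    next
      case 2
      then have "(i, l) \<in> inversions m s" using l ij \<open>s j + 1 < s i\<close> by (auto simp: inversions_def)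
      moreover have "nat (s i - s l) < nat (s i - s j)" using l \<open>s j + 1 < s i\<close> by simp
      ultimately show ?thesis using less.hyps by blast
    qed
  qed (use less.prems in blast)
qed

lemma unsigned_perm_eq_id_if_no_inversions:
  assumes "s \<in> unsigned_perms m" "inversions m s = {}"
  shows "s = id"
proof -
  let ?P = "{1..int m}"
  have bij: "bij_betw s ?P ?P" using assms(1) by (rule unsigned_perms_bij_betw_pos)
  have "sorted_wrt (\<lambda>i j. s i < s j) [1..int m]"
  proof (rule sorted_wrt_mono_rel[OF _ sorted_wrt_upto])
    fix i j assume ij: "i \<in> set [1..int m]" "j \<in> set [1..int m]" "i < j"
    then have "s i \<noteq> s j" using bij_betw_imp_inj_on[OF bij] by (auto dest: inj_onD)
    moreover have "\<not> s j < s i" using assms(2) ij by (auto simp: inversions_def)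
    ultimately show "s i < s j" by simp
  qed
  then have "sorted_wrt (<) (map s [1..int m])" by (simp add: sorted_wrt_map)
  then have "sorted (map s [1..int m])" "distinct (map s [1..int m])"
    by (simp_all add: strict_sorted_iff)
  moreover have "set (map s [1..int m]) = set [1..int m]" using bij by (simp add: bij_betw_def)
  ultimately have "map s [1..int m] = [1..int m]" by (simp add: sorted_distinct_set_unique)
  then have pos: "s i = i" if "i \<in> ?P" for i using that map_eq_conv[of s _ id] by simp
  show ?thesis
  proof
    fix i
    consider "i \<in> ?P" | "- i \<in> ?P" | "i \<notin> {-int m..-1} \<union> ?P" by force
    then show "s i = id i"
    proof cases
      case 2
      then show ?thesis using pos[of "- i"] unsigned_perms_minus[OF assms(1), of "- i"] by simp
    next
      case 3
      then show ?thesis using assms(1) unfolding unsigned_perms_def signed_perms_def by simp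
    qed (simp add: pos)
  qed
qed

abbreviation cox_word :: "nat list \<Rightarrow> int \<Rightarrow> int" where
  "cox_word ws \<equiv> foldr (\<circ>) (map cox_gen ws) id"

lemma inj_cox_word: "inj (cox_word ws)"
  by (induction ws) (auto simp: inj_def inj_eq[OF inj_cox_gen])

lemma cox_word_minus: "cox_word ws (- i) = - cox_word ws i"
  by (induction ws arbitrary: i) (auto simp: cox_gen_minus)

lemma card_inversions_cox_word_le: "card (inversions m (cox_word ws)) \<le> length ws"
proof (induction ws)
  case Nil
  have "inversions m (\<lambda>i. i) = {}" by (auto simp: inversions_def)
  then show ?case by simp
next
  case (Cons k ws)
  have word: "cox_word (k # ws) = cox_gen k \<circ> cox_word ws" by simp
  show ?case
    unfolding word length_Cons
    using card_inversions_cox_gen_comp_le[OF inj_cox_word cox_word_minus, of m k ws] Cons.IH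
    by linarith
qed

lemma cox_word_of_unsigned_perm:
  "s \<in> unsigned_perms m \<Longrightarrow>
     \<exists>ws. length ws = card (inversions m s) \<and> set ws \<subseteq> {0..<m} \<and> cox_word ws = s"
proof (induction "card (inversions m s)" arbitrary: s rule: less_induct)
  case less
  show ?case
  proof (cases "inversions m s = {}")
    case True
    then show ?thesis
      using unsigned_perm_eq_id_if_no_inversions[OF less.prems] by (intro exI[of _ "[]"]) simp
  next
    case False
    then obtain q p where qp: "(q, p) \<in> inversions m s" "s q = s p + 1"
      using inversions_adjacent_values[OF less.prems] by fast
    have "s p \<in> {1..int m}" "s q \<in> {1..int m}"
      using qp(1) bij_betwE[OF unsigned_perms_bij_betw_pos[OF less.prems]]
      by (auto simp: inversions_def)
    then obtain k where k: "s p = int k" "1 \<le> k" "k < m"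
      using qp(2) by (intro that[of "nat (s p)"]) auto
    have s': "cox_gen k \<circ> s \<in> unsigned_perms m"
      using cox_gen_comp_unsigned_perms[OF less.prems k(2,3)] .
    have card: "card (inversions m s) = card (inversions m (cox_gen k \<circ> s)) + 1"
      using card_inversions_cox_gen_comp_swap[OF less.prems, of q p k] qp k by (auto simp: inversions_def)
    obtain ws where ws: "length ws = card (inversions m (cox_gen k \<circ> s))" "set ws \<subseteq> {0..<m}"
        "cox_word ws = cox_gen k \<circ> s"
      using less.hyps[OF _ s'] card by auto
    show ?thesis using ws card k by (intro exI[of _ "k # ws"]) auto
  qed
qed

lemma length_B_unsigned_perms:
  assumes "s \<in> unsigned_perms m"
  shows "length_B m s = card (inversions m s)"
  unfolding length_B_def
proof (rule Least_equality)
  show "\<exists>ws. length ws = card (inversions m s) \<and> set ws \<subseteq> {0..<m} \<and> cox_word ws = s"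
    using cox_word_of_unsigned_perm[OF assms] .
next
  fix l assume "\<exists>ws. length ws = l \<and> set ws \<subseteq> {0..<m} \<and> cox_word ws = s"
  then show "card (inversions m s) \<le> l" using card_inversions_cox_word_le by blast
qed

lemma del_B_cox_gen_1_comp_swap:
  assumes s: "s \<in> unsigned_perms m" and "1 \<le> q" "q < p" "p \<le> int m" "s q = 2" "s p = 1"
  shows "del_B m s = del_B m (cox_gen 1 \<circ> s) + 1"
proof -
  let ?P = "{1..int m}"
  define D where "D f = {j \<in> {2..int m}. \<forall>i\<in>{1..<j}. f j < f i}" for f :: "int \<Rightarrow> int"
  have bij: "bij_betw s ?P ?P" using s by (rule unsigned_perms_bij_betw_pos)
  have qp: "q \<in> ?P" "p \<in> ?P" using assms(2-4) by auto
  have "p \<in> D s"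
  proof -
    have "s p < s i" if "i \<in> {1..<p}" for i
    proof -
      have "i \<in> ?P" using that assms(4) by auto
      then have "s i \<in> ?P" "s i \<noteq> s p"
        using bij_betwE[OF bij] inj_onD[OF bij_betw_imp_inj_on[OF bij], of i p] qp that by auto
      then show ?thesis using assms(6) by auto
    qed
    then show ?thesis using assms(2-4) unfolding D_def by auto
  qed
  moreover have p_out: "p \<notin> D (cox_gen 1 \<circ> s)"
  proof -
    have "cox_gen 1 (s q) = 1" "cox_gen 1 (s p) = 2" using assms(5,6) by (auto simp: cox_gen_def)
    then show ?thesis using assms(2,3) unfolding D_def by force
  qed
  moreover have "j \<in> D s \<longleftrightarrow> j \<in> D (cox_gen 1 \<circ> s)" if "j \<noteq> p" for j
  proof -
    have "cox_gen 1 (s j) < cox_gen 1 (s i) \<longleftrightarrow> s j < s i"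
      if "j \<in> {2..int m}" "i \<in> {1..<j}" for i
      using unsigned_perms_cox_gen_comp_less_iff[OF s qp assms(3), of 1 i j] assms(5,6) that \<open>j \<noteq> p\<close>
      by auto
    then show ?thesis unfolding D_def by auto
  qed
  ultimately have "D s = insert p (D (cox_gen 1 \<circ> s))" by (intro set_eqI) (metis insert_iff)
  moreover have "finite (D (cox_gen 1 \<circ> s))"
    by (rule finite_subset[of _ "{2..int m}"]) (auto simp: D_def)
  moreover have "del_B m f = card (D f)" for f unfolding del_B_def D_def by simp
  ultimately show ?thesis using p_out by simp
qed

lemma length_L_cox_gen_1_comp_swap:
  assumes "s \<in> unsigned_perms m" "1 \<le> q" "q < p" "p \<le> int m" "s q = 2" "s p = 1"
  shows "length_L m s = length_L m (cox_gen 1 \<circ> s)"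
proof -
  have "cox_gen 1 \<circ> s \<in> unsigned_perms m"
    using assms by (intro cox_gen_comp_unsigned_perms) auto
  then show ?thesis
    using card_inversions_cox_gen_comp_swap[OF assms(1-4), of 1] del_B_cox_gen_1_comp_swap[OF assms] assms
    by (simp add: length_L_def length_B_unsigned_perms[OF assms(1)] length_B_unsigned_perms)
qed

theorem lemma3p4:
  fixes n :: nat and \<rho> :: "int \<Rightarrow> int"
  assumes "n \<ge> 1" and "\<rho> \<in> unsigned_perms (n + 1)"
  shows "length_L (n + 1) \<rho> = length_L (n + 1) (cox_gen 1 \<circ> \<rho>)"
proof -
  let ?P = "{1..int (n + 1)}"
  have "\<rho> ` ?P = ?P"
    using unsigned_perms_bij_betw_pos[OF assms(2)] by (simp add: bij_betw_def)
  then have "1 \<in> \<rho> ` ?P" "2 \<in> \<rho> ` ?P" using assms(1) by auto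
  then obtain p q where p: "p \<in> ?P" "\<rho> p = 1" and q: "q \<in> ?P" "\<rho> q = 2"
    by (metis imageE)
  have "p \<noteq> q" using p q by auto
  then consider "q < p" | "p < q" by linarith
  then show ?thesis
  proof cases
    case 1
    then show ?thesis
      using length_L_cox_gen_1_comp_swap[OF assms(2) _ 1 _ q(2) p(2)] p(1) q(1) by simp
  next
    case 2
    have "cox_gen 1 \<circ> \<rho> \<in> unsigned_perms (n + 1)"
      using cox_gen_comp_unsigned_perms[OF assms(2)] assms(1) by simp
    moreover have "(cox_gen 1 \<circ> \<rho>) p = 2" "(cox_gen 1 \<circ> \<rho>) q = 1"
      using p(2) q(2) by (simp_all add: cox_gen_def)
    ultimately have "length_L (n + 1) (cox_gen 1 \<circ> \<rho>) = length_L (n + 1) \<rho>"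
      using length_L_cox_gen_1_comp_swap[of "cox_gen 1 \<circ> \<rho>" "n + 1" p q] 2 p(1) q(1) by simp
    then show ?thesis by simp
  qed
qed

end
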